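(* Let $M$ be a matroid of rank $k$ on a set $E$ with $\#E=n$, let $\mathfrak{S}\subseteq\mathcal{P}(E)$, and let $\mathfrak{S}'=\{E-S:S\in\mathfrak{S}\}$. Then (1) $\mathrm{ec}_{\mathfrak{S}}(M)=\mathrm{ec}_{\mathfrak{S}'}(M^* )$; and (2) for every $S\in\mathfrak{S}$, $a_{\mathfrak{S}}(S)$ computed in $M$ equals $b_{\mathfrak{S}'}(E-S)$ computed in $M^*$.
   Context: $M^*$ is the dual matroid (bases are complements of bases of $M$; it has rank $n-k$). For a matroid $N$ of rank $d$ on $E$ and $\mathfrak{T}\subseteq\mathcal{P}(E)$, regarded as a poset under inclusion with Möbius function $\mu_{\mathfrak{T}}$: $c(T)=\#T-\mathrm{rk}_N T$; $a_{\mathfrak{T}}(T)=c(T)-\sum_{U\in\mathfrak{T},U\subsetneq T}a_{\mathfrak{T}}(U)$ recursively (equivalently $a_{\mathfrak{T}}(S)=\sum_{T\in\mathfrak{T}}c(T)\mu_{\mathfrak{T}}(T,S)$); $b_{\mathfrak{T}}(T)=\sum_{S\in\mathfrak{T}}(d-\mathrm{rk}_N S)\mu_{\mathfrak{T}}(T,S)$; and $\mathrm{ec}_{\mathfrak{T}}(N)=\sum_{S\in\mathfrak{T}}(d-\mathrm{rk}_N S)a_{\mathfrak{T}}(S)=\sum_{T\in\mathfrak{T}}c(T)b_{\mathfrak{T}}(T)$. *)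

theory Defs
  imports Main
begin

definition matroid :: "'a set \<Rightarrow> ('a set \<Rightarrow> bool) \<Rightarrow> bool" where
  "matroid E indep \<longleftrightarrow>
     finite E \<and>
     (\<forall>I. indep I \<longrightarrow> I \<subseteq> E) \<and>
     indep {} \<and>
     (\<forall>I J. indep J \<and> I \<subseteq> J \<longrightarrow> indep I) \<and>
     (\<forall>I J. indep I \<and> indep J \<and> card I < card J \<longrightarrow> (\<exists>x\<in>J - I. indep (insert x I)))"

definition rk :: "('a set \<Rightarrow> bool) \<Rightarrow> 'a set \<Rightarrow> nat" where
  "rk indep X = Max (card ` {I. I \<subseteq> X \<and> indep I})"

definition basis :: "('a set \<Rightarrow> bool) \<Rightarrow> 'a set \<Rightarrow> bool" where
  "basis indep B \<longleftrightarrow> indep B \<and> (\<forall>I. indep I \<and> B \<subseteq> I \<longrightarrow> I = B)"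

text \<open>Dual matroid: its bases are the complements of the bases of M,
  so its independent sets are the subsets of such complements.\<close>
definition dual_indep :: "'a set \<Rightarrow> ('a set \<Rightarrow> bool) \<Rightarrow> 'a set \<Rightarrow> bool" where
  "dual_indep E indep I \<longleftrightarrow> (\<exists>B. basis indep B \<and> I \<subseteq> E - B)"

definition cnull :: "('a set \<Rightarrow> bool) \<Rightarrow> 'a set \<Rightarrow> int" where
  "cnull indep T = int (card T) - int (rk indep T)"

function mobius :: "'a set set \<Rightarrow> 'a set \<Rightarrow> 'a set \<Rightarrow> int" where
  "mobius P T S =
     (if T = S then 1
      else if T \<subset> S \<and> finite S
        then - (\<Sum>U\<in>{U\<in>P. T \<subseteq> U \<and> U \<subset> S}. mobius P T U)
      else 0)"
  by pat_completeness auto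
termination
  by (relation "measure (\<lambda>(P, T, S). card S)")
     (auto intro: psubset_card_mono)

declare mobius.simps [simp del]

function acoef :: "('a set \<Rightarrow> bool) \<Rightarrow> 'a set set \<Rightarrow> 'a set \<Rightarrow> int" where
  "acoef indep P T =
     (if finite T
      then cnull indep T - (\<Sum>U\<in>{U\<in>P. U \<subset> T}. acoef indep P U)
      else 0)"
  by pat_completeness auto
termination
  by (relation "measure (\<lambda>(indep, P, T). card T)")
     (auto intro: psubset_card_mono)

declare acoef.simps [simp del]

definition bcoef :: "'a set \<Rightarrow> ('a set \<Rightarrow> bool) \<Rightarrow> 'a set set \<Rightarrow> 'a set \<Rightarrow> int" where
  "bcoef E indep P T = (\<Sum>S\<in>P. (int (rk indep E) - int (rk indep S)) * mobius P T S)"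

definition ec :: "'a set \<Rightarrow> ('a set \<Rightarrow> bool) \<Rightarrow> 'a set set \<Rightarrow> int" where
  "ec E indep P = (\<Sum>S\<in>P. (int (rk indep E) - int (rk indep S)) * acoef indep P S)"

end

theory Submission imports Defs begin

text \<open>The rank of the dual matroid satisfies \<open>rk\<^sup>* X = #X - rk E + rk (E - X)\<close>: every dual
  independent subset of \<open>X\<close> lies in some \<open>X - B\<close> with \<open>B\<close> a basis, and \<open>#(X - B)\<close> is
  largest when \<open>B\<close> meets \<open>E - X\<close> in a maximal independent subset. Consequently, for \<open>T \<subseteq> E\<close>, the corank
  \<open>rk\<^sup>* E - rk\<^sup>* (E - T)\<close> of \<open>E - T\<close> in \<open>M\<^sup>*\<close> is the nullity \<open>c(T)\<close> in \<open>M\<close>, and the nullity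
  of \<open>E - T\<close> in \<open>M\<^sup>*\<close> is the corank \<open>rk E - rk T\<close> in \<open>M\<close>. Complementation is an
  order-reversing bijection from \<open>\<SS>\<close> onto \<open>\<SS>'\<close>, so \<open>\<mu>\<^sub>\<SS>'(E - S, E - T)\<close> is the Moebius
  function of \<open>\<SS>\<close> for the reversed order. Both claims then follow by swapping the two
  summations and applying Moebius inversion, with the roles of nullity and corank exchanged.\<close>

lemma matroidD:
  assumes "matroid E indep"
  shows "finite E" "\<And>I. indep I \<Longrightarrow> I \<subseteq> E" "indep {}"
    "\<And>I J. indep J \<Longrightarrow> I \<subseteq> J \<Longrightarrow> indep I"
    "\<And>I J. indep I \<Longrightarrow> indep J \<Longrightarrow> card I < card J \<Longrightarrow> \<exists>x\<in>J - I. indep (insert x I)"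
  using assms unfolding matroid_def by blast+

lemma finite_indep_subsets:
  assumes "matroid E indep"
  shows "finite {I. I \<subseteq> X \<and> indep I}"
proof -
  have "{I. I \<subseteq> X \<and> indep I} \<subseteq> Pow E" using matroidD(2)[OF assms] by auto
  then show ?thesis using matroidD(1)[OF assms] by (meson finite_Pow_iff finite_subset)
qed

lemma card_le_rk:
  assumes "matroid E indep" "indep I" "I \<subseteq> X"
  shows "card I \<le> rk indep X"
  unfolding rk_def using finite_indep_subsets[OF assms(1), of X] assms(2,3) by (intro Max_ge) auto

lemma rk_attained:
  assumes "matroid E indep"
  obtains I where "I \<subseteq> X" "indep I" "card I = rk indep X"
proof -
  have "rk indep X \<in> card ` {I. I \<subseteq> X \<and> indep I}" unfolding rk_def
    using finite_indep_subsets[OF assms, of X] matroidD(3)[OF assms] by (intro Max_in) auto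
  then show ?thesis using that by auto
qed

lemma rk_empty:
  assumes "matroid E indep"
  shows "rk indep {} = 0"
  using rk_attained[OF assms, of "{}"] by (metis card.empty subset_empty)

lemma basis_subset:
  assumes "matroid E indep" "basis indep B"
  shows "B \<subseteq> E"
  using assms matroidD(2) basis_def by blast

lemma exists_basis_superset:
  assumes "matroid E indep" "indep I"
  obtains B where "basis indep B" "I \<subseteq> B"
proof -
  let ?F = "{J. indep J \<and> I \<subseteq> J}"
  have "?F \<subseteq> {J. J \<subseteq> E \<and> indep J}" using matroidD(2)[OF assms(1)] by auto
  then have fin: "finite ?F" using finite_indep_subsets[OF assms(1), of E] finite_subset by blast
  have "Max (card ` ?F) \<in> card ` ?F" using fin assms(2) by (intro Max_in) auto
  then obtain J where J: "J \<in> ?F" "card J = Max (card ` ?F)" by auto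
  have "basis indep J" unfolding basis_def
  proof (intro conjI allI impI)
    show "indep J" using J by auto
    fix K assume K: "indep K \<and> J \<subseteq> K"
    then have "card K \<le> card J" using J fin by auto
    moreover have "finite K" using K matroidD(1,2)[OF assms(1)] finite_subset by blast
    ultimately show "K = J" using K card_seteq by blast
  qed
  then show ?thesis using that J by auto
qed

lemma card_basis:
  assumes M: "matroid E indep" and B: "basis indep B"
  shows "card B = rk indep E"
proof -
  have indep_B: "indep B" using B basis_def by auto
  obtain I where I: "I \<subseteq> E" "indep I" "card I = rk indep E" using rk_attained[OF M] by blast
  have "\<not> card B < card I"
  proof
    assume "card B < card I"
    then obtain x where "x \<in> I - B" "indep (insert x B)"
      using matroidD(5)[OF M indep_B I(2)] by auto
    with B show False unfolding basis_def by blast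
  qed
  then show ?thesis using card_le_rk[OF M indep_B basis_subset[OF M B]] I by auto
qed

lemma rk_dual:
  assumes M: "matroid E indep" and X: "X \<subseteq> E"
  shows "int (rk (dual_indep E indep) X) = int (card X) - int (rk indep E) + int (rk indep (E - X))"
proof -
  have fin_E: "finite E" using matroidD(1)[OF M] .
  have fin_X: "finite X" using finite_subset[OF X fin_E] .
  let ?d = "rk indep E" and ?r = "rk indep (E - X)"
  have card_diff_basis: "int (card (X - B)) = int (card X) - int ?d + int (card (B \<inter> (E - X)))"
    if B: "basis indep B" for B
  proof -
    have "finite B" using basis_subset[OF M B] fin_E finite_subset by blast
    then have "card B = card (B \<inter> X) + card (B - X)" by (rule card_Int_Diff)
    moreover have "card X = card (B \<inter> X) + card (X - B)"
      using card_Int_Diff[OF fin_X, of B] by (simp add: Int_commute)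
    moreover have "B - X = B \<inter> (E - X)" using basis_subset[OF M B] by blast
    ultimately show ?thesis using card_basis[OF M B] by simp
  qed
  have basis_meet_le: "card (B \<inter> (E - X)) \<le> ?r" if B: "basis indep B" for B
  proof -
    have "indep (B \<inter> (E - X))"
      using B matroidD(4)[OF M, of B "B \<inter> (E - X)"] unfolding basis_def by blast
    then show ?thesis using card_le_rk[OF M] by blast
  qed
  obtain I0 where I0: "I0 \<subseteq> E - X" "indep I0" "card I0 = ?r" by (rule rk_attained[OF M])
  obtain B0 where B0: "basis indep B0" "I0 \<subseteq> B0" by (rule exists_basis_superset[OF M I0(2)])
  have "card I0 \<le> card (B0 \<inter> (E - X))"
    using card_mono[of "B0 \<inter> (E - X)" I0] B0(2) I0(1) fin_E by blast
  then have B0_meet: "card (B0 \<inter> (E - X)) = ?r"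
    using le_antisym[OF basis_meet_le[OF B0(1)]] I0(3) by simp
  let ?D = "{I. I \<subseteq> X \<and> dual_indep E indep I}"
  have fin_D: "finite ?D" by (rule finite_subset[of _ "Pow X"]) (use fin_X in auto)
  have X_B0: "X - B0 \<in> ?D" unfolding dual_indep_def using B0 X by auto
  have "card (X - B0) \<le> rk (dual_indep E indep) X" unfolding rk_def
    using fin_D X_B0 by (intro Max_ge) auto
  moreover have "rk (dual_indep E indep) X \<le> card (X - B0)" unfolding rk_def
  proof (rule Max.boundedI)
    show "finite (card ` ?D)" "card ` ?D \<noteq> {}" using fin_D X_B0 by auto
    fix a assume "a \<in> card ` ?D"
    then obtain I B where IB: "I \<subseteq> X" "basis indep B" "I \<subseteq> E - B" "a = card I"
      unfolding dual_indep_def by auto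
    then have "a \<le> card (X - B)" using fin_X by (auto intro: card_mono)
    then show "a \<le> card (X - B0)"
      using card_diff_basis[OF IB(2)] card_diff_basis[OF B0(1)] B0_meet basis_meet_le[OF IB(2)]
      by linarith
  qed
  ultimately show ?thesis using card_diff_basis[OF B0(1)] B0_meet by simp
qed

lemma cnull_dual_compl:
  assumes "matroid E indep" "T \<subseteq> E"
  shows "cnull (dual_indep E indep) (E - T) = int (rk indep E) - int (rk indep T)"
  using rk_dual[OF assms(1), of "E - T"] assms(2) by (simp add: cnull_def double_diff)

lemma corank_dual_compl:
  assumes M: "matroid E indep" and T: "T \<subseteq> E"
  shows "int (rk (dual_indep E indep) E) - int (rk (dual_indep E indep) (E - T)) = cnull indep T"
proof -
  have "card E = card T + card (E - T)"
    using card_Int_Diff[OF matroidD(1)[OF M], of T] T by (simp add: Int_absorb1)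
  then show ?thesis
    using rk_dual[OF M, of E] rk_dual[OF M, of "E - T"] rk_empty[OF M] T
    by (simp add: cnull_def double_diff)
qed

lemma mobius_eq_0_if_not_subset: "\<not> A \<subseteq> B \<Longrightarrow> mobius Q A B = 0"
  by (subst mobius.simps) auto

lemma sum_mobius_interval:
  assumes "A \<in> Q" "B \<in> Q" "A \<subseteq> B" "finite B"
  shows "(\<Sum>V\<in>{V\<in>Q. A \<subseteq> V \<and> V \<subseteq> B}. mobius Q A V) = (if A = B then 1 else 0)"
proof (cases "A = B")
  case True
  then have "{V\<in>Q. A \<subseteq> V \<and> V \<subseteq> B} = {A}" using assms(1) by auto
  then show ?thesis using True by (simp add: mobius.simps)
next
  case False
  have "{V\<in>Q. A \<subseteq> V \<and> V \<subseteq> B} = insert B {V\<in>Q. A \<subseteq> V \<and> V \<subset> B}" using assms(2,3) by auto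
  moreover have "finite {V\<in>Q. A \<subseteq> V \<and> V \<subset> B}"
    by (rule finite_subset[of _ "Pow B"]) (use assms(4) in auto)
  moreover have "mobius Q A B = - (\<Sum>V\<in>{V\<in>Q. A \<subseteq> V \<and> V \<subset> B}. mobius Q A V)"
    using False assms(3,4) by (subst mobius.simps) auto
  ultimately show ?thesis using False by simp
qed

lemma cnull_eq_sum_acoef:
  assumes "finite P" "T \<in> P" "finite T"
  shows "cnull indep T = (\<Sum>U\<in>{U\<in>P. U \<subseteq> T}. acoef indep P U)"
proof -
  have "{U\<in>P. U \<subseteq> T} = insert T {U\<in>P. U \<subset> T}" using assms(2) by auto
  moreover have "acoef indep P T = cnull indep T - (\<Sum>U\<in>{U\<in>P. U \<subset> T}. acoef indep P U)"
    using assms(3) by (subst acoef.simps) simp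
  ultimately show ?thesis using assms(1) by simp
qed

lemma sum_downset_swap:
  fixes g h :: "'a set \<Rightarrow> 'b::semiring_0"
  assumes "finite P"
  shows "(\<Sum>T\<in>P. (\<Sum>U\<in>{U\<in>P. U \<subseteq> T}. g U) * h T)
       = (\<Sum>U\<in>P. g U * (\<Sum>T\<in>{T\<in>P. U \<subseteq> T}. h T))"
proof -
  have "(\<Sum>T\<in>P. (\<Sum>U\<in>{U\<in>P. U \<subseteq> T}. g U) * h T)
      = (\<Sum>T\<in>P. \<Sum>U\<in>{U\<in>P. U \<subseteq> T}. g U * h T)"
    by (rule sum.cong) (simp_all add: sum_distrib_right)
  also have "\<dots> = (\<Sum>U\<in>P. \<Sum>T\<in>{T\<in>P. U \<subseteq> T}. g U * h T)"
    by (rule sum.swap_restrict[OF assms assms])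
  finally show ?thesis by (simp add: sum_distrib_left)
qed

lemma sum_compl_image:
  assumes "P \<subseteq> Pow E"
  shows "(\<Sum>V\<in>(\<lambda>S. E - S) ` P. f V) = (\<Sum>T\<in>P. f (E - T))"
proof -
  have "inj_on (\<lambda>S. E - S) P" using assms by (intro inj_onI) blast
  then show ?thesis by (simp add: sum.reindex)
qed

lemma sum_compl_image_filter:
  assumes "P \<subseteq> Pow E"
  shows "(\<Sum>V\<in>{V\<in>(\<lambda>S. E - S) ` P. Q V}. f V) = (\<Sum>T\<in>{T\<in>P. Q (E - T)}. f (E - T))"
proof -
  have "{V\<in>(\<lambda>S. E - S) ` P. Q V} = (\<lambda>S. E - S) ` {T\<in>P. Q (E - T)}" by auto
  moreover have "{T\<in>P. Q (E - T)} \<subseteq> Pow E" using assms by auto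
  ultimately show ?thesis using sum_compl_image[of _ E f] by simp
qed

lemma sum_mobius_compl_upset:
  assumes P: "P \<subseteq> Pow E" "finite E" and U: "U \<in> P" and S: "S \<in> P"
  shows "(\<Sum>T\<in>{T\<in>P. U \<subseteq> T}. mobius ((\<lambda>S. E - S) ` P) (E - S) (E - T))
       = (if U = S then 1 else 0)"
proof -
  let ?P' = "(\<lambda>S. E - S) ` P"
  have fin_P: "finite P" using P by (meson finite_Pow_iff finite_subset)
  have "(\<Sum>T\<in>{T\<in>P. U \<subseteq> T}. mobius ?P' (E - S) (E - T))
      = (\<Sum>T\<in>{T\<in>P. U \<subseteq> T \<and> T \<subseteq> S}. mobius ?P' (E - S) (E - T))"
    using fin_P P(1) S
    by (intro sum.mono_neutral_right) (auto intro!: mobius_eq_0_if_not_subset)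
  also have "{T\<in>P. U \<subseteq> T \<and> T \<subseteq> S} = {T\<in>P. E - S \<subseteq> E - T \<and> E - T \<subseteq> E - U}"
    using P(1) U S by blast
  also have "(\<Sum>T\<in>\<dots>. mobius ?P' (E - S) (E - T))
      = (\<Sum>V\<in>{V\<in>?P'. E - S \<subseteq> V \<and> V \<subseteq> E - U}. mobius ?P' (E - S) V)"
    by (rule sum_compl_image_filter[OF P(1), symmetric])
  also have "\<dots> = (if U = S then 1 else 0)"
  proof (cases "U \<subseteq> S")
    case True
    then have "E - S \<subseteq> E - U" by blast
    moreover have "(E - S = E - U) = (U = S)" using P(1) U S by blast
    ultimately show ?thesis
      using sum_mobius_interval[of "E - S" ?P' "E - U"] P(2) U S by simp
  next
    case False
    then have "{V\<in>?P'. E - S \<subseteq> V \<and> V \<subseteq> E - U} = {}" using P(1) U S by blast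
    then show ?thesis using False by (metis sum.empty subset_refl)
  qed
  finally show ?thesis .
qed

lemma mobius_inversion_compl:
  assumes P: "P \<subseteq> Pow E" "finite E" and S: "S \<in> P"
    and f: "\<And>T. T \<in> P \<Longrightarrow> f T = (\<Sum>U\<in>{U\<in>P. U \<subseteq> T}. g U)"
  shows "(\<Sum>T\<in>P. f T * mobius ((\<lambda>S. E - S) ` P) (E - S) (E - T)) = g S"
proof -
  let ?\<mu> = "\<lambda>T. mobius ((\<lambda>S. E - S) ` P) (E - S) (E - T)"
  have fin_P: "finite P" using P by (meson finite_Pow_iff finite_subset)
  have "(\<Sum>T\<in>P. f T * ?\<mu> T) = (\<Sum>T\<in>P. (\<Sum>U\<in>{U\<in>P. U \<subseteq> T}. g U) * ?\<mu> T)"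
    using f by simp
  also have "\<dots> = (\<Sum>U\<in>P. g U * (\<Sum>T\<in>{T\<in>P. U \<subseteq> T}. ?\<mu> T))"
    by (rule sum_downset_swap[OF fin_P])
  also have "\<dots> = (\<Sum>U\<in>P. if U = S then g U else 0)"
    using sum_mobius_compl_upset[OF P _ S] by (intro sum.cong) auto
  also have "\<dots> = g S" using S fin_P by simp
  finally show ?thesis .
qed

lemma acoef_eq_bcoef_dual:
  assumes M: "matroid E indep" and P: "P \<subseteq> Pow E" and S: "S \<in> P"
  shows "acoef indep P S = bcoef E (dual_indep E indep) ((\<lambda>S. E - S) ` P) (E - S)"
proof -
  have fin_E: "finite E" using matroidD(1)[OF M] .
  have fin_P: "finite P" using P fin_E by (meson finite_Pow_iff finite_subset)
  have fin: "finite T" if "T \<in> P" for T using that P fin_E finite_subset by blast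
  have "bcoef E (dual_indep E indep) ((\<lambda>S. E - S) ` P) (E - S)
      = (\<Sum>T\<in>P. cnull indep T * mobius ((\<lambda>S. E - S) ` P) (E - S) (E - T))"
    unfolding bcoef_def sum_compl_image[OF P] using P
    by (intro sum.cong) (auto simp: corank_dual_compl[OF M])
  also have "\<dots> = acoef indep P S"
    by (intro mobius_inversion_compl[OF P fin_E S] cnull_eq_sum_acoef[OF fin_P _ fin])
  finally show ?thesis by simp
qed

lemma ec_dual:
  assumes M: "matroid E indep" and P: "P \<subseteq> Pow E"
  shows "ec E indep P = ec E (dual_indep E indep) ((\<lambda>S. E - S) ` P)"
proof -
  let ?D = "dual_indep E indep" and ?P' = "(\<lambda>S. E - S) ` P"
  let ?\<alpha> = "\<lambda>T. acoef ?D ?P' (E - T)"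
  have fin_E: "finite E" using matroidD(1)[OF M] .
  have fin_P: "finite P" using P fin_E by (meson finite_Pow_iff finite_subset)
  have fin: "finite T" if "T \<in> P" for T using that P fin_E finite_subset by blast
  have corank: "int (rk indep E) - int (rk indep S) = (\<Sum>T\<in>{T\<in>P. S \<subseteq> T}. ?\<alpha> T)"
    if S: "S \<in> P" for S
  proof -
    have "int (rk indep E) - int (rk indep S) = cnull ?D (E - S)"
      using cnull_dual_compl[OF M] S P by auto
    also have "\<dots> = (\<Sum>V\<in>{V\<in>?P'. V \<subseteq> E - S}. acoef ?D ?P' V)"
      using fin_P fin_E S by (intro cnull_eq_sum_acoef) auto
    also have "\<dots> = (\<Sum>T\<in>{T\<in>P. E - T \<subseteq> E - S}. ?\<alpha> T)"
      by (rule sum_compl_image_filter[OF P])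
    also have "{T\<in>P. E - T \<subseteq> E - S} = {T\<in>P. S \<subseteq> T}" using P S by blast
    finally show ?thesis .
  qed
  have "ec E indep P = (\<Sum>S\<in>P. acoef indep P S * (\<Sum>T\<in>{T\<in>P. S \<subseteq> T}. ?\<alpha> T))"
    unfolding ec_def by (intro sum.cong) (auto simp: corank)
  also have "\<dots> = (\<Sum>T\<in>P. (\<Sum>S\<in>{S\<in>P. S \<subseteq> T}. acoef indep P S) * ?\<alpha> T)"
    by (rule sum_downset_swap[OF fin_P, symmetric])
  also have "\<dots> = (\<Sum>T\<in>P. cnull indep T * ?\<alpha> T)"
    by (intro sum.cong) (auto simp: cnull_eq_sum_acoef[OF fin_P _ fin])
  also have "\<dots> = ec E ?D ?P'"
    unfolding ec_def sum_compl_image[OF P] using P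
    by (intro sum.cong) (auto simp: corank_dual_compl[OF M])
  finally show ?thesis .
qed

theorem proposition6p2:
  fixes E :: "'a set" and indep :: "'a set \<Rightarrow> bool"
    and \<SS> :: "'a set set" and n k :: nat
  assumes "matroid E indep"
    and "card E = n"
    and "rk indep E = k"
    and "\<SS> \<subseteq> Pow E"
  shows "ec E indep \<SS> = ec E (dual_indep E indep) ((\<lambda>S. E - S) ` \<SS>)
         \<and> (\<forall>S\<in>\<SS>. acoef indep \<SS> S
                  = bcoef E (dual_indep E indep) ((\<lambda>S. E - S) ` \<SS>) (E - S))"
  using ec_dual[OF assms(1,4)] acoef_eq_bcoef_dual[OF assms(1,4)] by blast

end
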